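(* Let $d\ge 2$, $L\ge 2$ be integers and let $\mu_0^\star,\mu_1^\star\in\mathbb{S}^{d-1}$ be orthonormal. Let the rows $X_1,\dots,X_L$ of $\mathbb{X}\in\mathbb{R}^{L\times d}$ be i.i.d. with law $\frac12\delta_{\mu_0^\star}+\frac12\delta_{\mu_1^\star}$. Let $\lambda\in\,]0,\frac{L+1}{L+3}]$. Then there exists $\bar\gamma>0$ such that for any step size $0<\gamma<\bar\gamma$ and for a generic initialization $(\mu_0^0,\mu_1^0)\in\tilde{\mathcal{M}}$, the projected Riemannian gradient descent iterates $(\mu_0^k,\mu_1^k)$ for the risk $\mathcal{R}$ converge to $(\pm\mu_0^\star,\pm\mu_1^\star)$.
   Context: For $\mu\in\mathbb{R}^d$ the linear attention head is $H^{\mathrm{lin},\mu}(\mathbb{X})_\ell=\frac{2}{L}\sum_{k=1}^L\lambda\,(X_\ell^\top\mu\mu^\top X_k)\,X_k$, and $T^{\mathrm{lin},\mu_0,\mu_1}=H^{\mathrm{lin},\mu_0}+H^{\mathrm{lin},\mu_1}$. The risk is $\mathcal{R}(\mu_0,\mu_1)=\frac1L\sum_{\ell=1}^L\mathbb{E}\|X_\ell-T^{\mathrm{lin},\mu_0,\mu_1}(\mathbb{X})_\ell\|_2^2$, a smooth function on $\mathbb{R}^d\times\mathbb{R}^d$. Given $(\mu_0^0,\mu_1^0)\in(\mathbb{S}^{d-1})^2$ and $\gamma>0$, the iterates are, for $i\in\{0,1\}$, $\mu_i^{k+1}=\dfrac{\mu_i^k-\gamma(I_d-\mu_i^k(\mu_i^k)^\top)\nabla_{\mu_i}\mathcal{R}(\mu_0^k,\mu_1^k)}{\|\mu_i^k-\gamma(I_d-\mu_i^k(\mu_i^k)^\top)\nabla_{\mu_i}\mathcal{R}(\mu_0^k,\mu_1^k)\|_2}$.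 $\tilde{\mathcal{M}}=\{(\mu_0,\mu_1)\in(\mathbb{S}^{d-1})^2:\langle\mu_1^\star,\mu_0\rangle=0,\ \langle\mu_0^\star,\mu_1\rangle=0\}$. "Generic initialization" means the set of initializations in $\tilde{\mathcal{M}}$ for which the conclusion fails has Lebesgue measure zero with respect to $\tilde{\mathcal{M}}$. Convergence to $(\pm\mu_0^\star,\pm\mu_1^\star)$ means convergence to $(s_0\mu_0^\star,s_1\mu_1^\star)$ for some signs $s_0,s_1\in\{-1,1\}$. *)

theory Defs
  imports "HOL-Analysis.Analysis"
begin

definition lin_head :: "nat \<Rightarrow> real \<Rightarrow> real^'d \<Rightarrow> (nat \<Rightarrow> real^'d) \<Rightarrow> nat \<Rightarrow> real^'d" where
  "lin_head L lam mu X l =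
     (2 / real L) *\<^sub>R (\<Sum>k<L. (lam * ((X l \<bullet> mu) * (mu \<bullet> X k))) *\<^sub>R X k)"

definition lin_transf :: "nat \<Rightarrow> real \<Rightarrow> real^'d \<Rightarrow> real^'d \<Rightarrow> (nat \<Rightarrow> real^'d) \<Rightarrow> nat \<Rightarrow> real^'d" where
  "lin_transf L lam mu0 mu1 X l = lin_head L lam mu0 X l + lin_head L lam mu1 X l"

text \<open>Risk R(mu0,mu1) = (1/L) sum_l E ||X_l - T(X)_l||^2 where the rows X_1..X_L are i.i.d.
  with law (1/2) delta_{m0} + (1/2) delta_{m1}.  The expectation over this discrete law is
  the uniform average over all 2^L choices s : {0..L-1} -> bool (row k is m1 if s k, else m0).\<close>
definition sample :: "real^'d \<Rightarrow> real^'d \<Rightarrow> (nat \<Rightarrow> bool) \<Rightarrow> nat \<Rightarrow> real^'d" where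
  "sample m0 m1 s k = (if s k then m1 else m0)"

definition risk :: "nat \<Rightarrow> real \<Rightarrow> real^'d \<Rightarrow> real^'d \<Rightarrow> real^'d \<Rightarrow> real^'d \<Rightarrow> real" where
  "risk L lam m0 m1 mu0 mu1 =
     (1 / real L) * (\<Sum>l<L.
        (1 / 2 ^ L) * (\<Sum>s \<in> {..<L} \<rightarrow>\<^sub>E (UNIV :: bool set).
            (norm (sample m0 m1 s l - lin_transf L lam mu0 mu1 (sample m0 m1 s) l))\<^sup>2))"

definition grad0 :: "(real^'d \<Rightarrow> real^'d \<Rightarrow> real) \<Rightarrow> real^'d \<Rightarrow> real^'d \<Rightarrow> real^'d" where
  "grad0 R mu0 mu1 = (THE D. GDERIV (\<lambda>x. R x mu1) mu0 :> D)"

definition grad1 :: "(real^'d \<Rightarrow> real^'d \<Rightarrow> real) \<Rightarrow> real^'d \<Rightarrow> real^'d \<Rightarrow> real^'d" where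
  "grad1 R mu0 mu1 = (THE D. GDERIV (\<lambda>x. R mu0 x) mu1 :> D)"

definition rgd_update :: "real \<Rightarrow> real^'d \<Rightarrow> real^'d \<Rightarrow> real^'d" where
  "rgd_update gam mu g =
     (let v = mu - gam *\<^sub>R (g - (mu \<bullet> g) *\<^sub>R mu) in (1 / norm v) *\<^sub>R v)"

primrec rgd_iter :: "(real^'d \<Rightarrow> real^'d \<Rightarrow> real) \<Rightarrow> real \<Rightarrow> (real^'d) \<times> (real^'d)
     \<Rightarrow> nat \<Rightarrow> (real^'d) \<times> (real^'d)" where
  "rgd_iter R gam init 0 = init"
| "rgd_iter R gam init (Suc k) =
     (let (a, b) = rgd_iter R gam init k in
       (rgd_update gam a (grad0 R a b), rgd_update gam b (grad1 R a b)))"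

definition Mtilde :: "real^'d \<Rightarrow> real^'d \<Rightarrow> ((real^'d) \<times> (real^'d)) set" where
  "Mtilde m0 m1 = {(a, b). norm a = 1 \<and> norm b = 1 \<and> m1 \<bullet> a = 0 \<and> m0 \<bullet> b = 0}"

text \<open>Null sets w.r.t. the (Riemannian volume) measure of M~.  M~ = S(V0) x S(V1) with
  V0 = m1^perp, V1 = m0^perp.  The map Phi(a,b) = (normalize(P0 a), normalize(P1 b))
  (P_i orthogonal projections) is a submersion from (an open full-measure subset of)
  R^d x R^d onto M~ which pushes Gaussian measure to the uniform measure; hence N \<subseteq> M~
  is null in M~ iff Phi^{-1}(N) is Lebesgue-null in R^d x R^d.\<close>
definition Mtilde_chart :: "real^'d \<Rightarrow> real^'d \<Rightarrow> (real^'d) \<times> (real^'d) \<Rightarrow> (real^'d) \<times> (real^'d)" where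
  "Mtilde_chart m0 m1 p =
     (let a = fst p - (fst p \<bullet> m1) *\<^sub>R m1; b = snd p - (snd p \<bullet> m0) *\<^sub>R m0
      in ((1 / norm a) *\<^sub>R a, (1 / norm b) *\<^sub>R b))"

definition Mtilde_null :: "real^'d \<Rightarrow> real^'d \<Rightarrow> ((real^'d) \<times> (real^'d)) set \<Rightarrow> bool" where
  "Mtilde_null m0 m1 N \<longleftrightarrow>
     N \<subseteq> Mtilde m0 m1 \<and> {p. Mtilde_chart m0 m1 p \<in> N} \<in> null_sets lebesgue"

end

theory Submission
  imports Defs
begin

(* On the manifold M~ (mu0 orthogonal to m1, mu1 orthogonal to m0) the population risk depends on
   mu0, mu1 only through a quartic polynomial in the overlaps, computed from the first three moments
   of a Binomial(L, 1/2) row count.  Its partial gradient at (a, b) is -p K(p^2) m0 with p = <a, m0>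
   and K(u) = (2 lam / L) (L + 1 - lam (L + 3) u), symmetrically for b.  So the projected step keeps
   M~ invariant and moves each overlap by the scalar map p |-> sphere_step (gam K(p^2)) p, which
   preserves the sign of p and, once gam K <= 1, raises p^2 by at least gam K p^2 (1 - p^2) / 2.
   The bound lam <= (L + 1) / (L + 3) gives K(u) >= const (1 - u), forcing p^2 -> 1 whenever p
   starts nonzero.  Initializations with a vanishing overlap pull back under the chart to two
   hyperplanes. *)

lemma sum_Pow_cubic_card:
  fixes a b c d :: real
  assumes "finite S"
  shows "(\<Sum>A\<in>Pow S. a + b * real (card A) + c * real (card A) ^ 2 + d * real (card A) ^ 3)
    = 2 ^ card S * (a + b * real (card S) / 2 + c * real (card S) * (real (card S) + 1) / 4
                    + d * real (card S) ^ 2 * (real (card S) + 3) / 8)"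
  using assms
proof (induction S arbitrary: a b c d rule: finite_induct)
  case (insert x F)
  let ?q = "\<lambda>a b c d (k::nat). a + b * real k + c * real k ^ 2 + d * real k ^ 3"
  have inj: "inj_on (insert x) (Pow F)"
    using insert.hyps by (auto simp: inj_on_def)
  have "(\<Sum>A\<in>Pow (insert x F). ?q a b c d (card A))
      = (\<Sum>A\<in>Pow F. ?q a b c d (card A)) + (\<Sum>A\<in>Pow F. ?q a b c d (card (insert x A)))"
    unfolding Pow_insert using insert.hyps
    by (subst sum.union_disjoint) (auto simp: sum.reindex[OF inj])
  also have "(\<Sum>A\<in>Pow F. ?q a b c d (card (insert x A)))
      = (\<Sum>A\<in>Pow F. ?q (a + b + c + d) (b + 2 * c + 3 * d) (c + 3 * d) d (card A))"
  proof (intro sum.cong refl)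
    fix A assume "A \<in> Pow F"
    then have "finite A" "x \<notin> A"
      using insert.hyps finite_subset[of A F] by auto
    then have "card (insert x A) = card A + 1"
      by simp
    then show "?q a b c d (card (insert x A))
      = ?q (a + b + c + d) (b + 2 * c + 3 * d) (c + 3 * d) d (card A)"
      by (simp add: power2_eq_square power3_eq_cube algebra_simps)
  qed
  finally show ?case
    unfolding insert.IH using insert.hyps by (simp add: field_simps power2_eq_square power3_eq_cube)
qed simp

definition row_count :: "nat \<Rightarrow> bool \<Rightarrow> (nat \<Rightarrow> bool) \<Rightarrow> nat" where
  "row_count L b s = card {k\<in>{..<L}. s k = b}"

lemma row_count_True_False: "row_count L True s + row_count L False s = L"
proof -
  have "{k\<in>{..<L}. s k = True} \<union> {k\<in>{..<L}. s k = False} = {..<L}" by auto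
  then show ?thesis
    unfolding row_count_def by (subst card_Un_disjoint[symmetric]) auto
qed

lemma sum_comp_bool_row_count:
  fixes F :: "bool \<Rightarrow> 'a::real_vector"
  shows "(\<Sum>k<L. F (s k))
    = real (row_count L True s) *\<^sub>R F True + real (row_count L False s) *\<^sub>R F False"
proof -
  have "(\<Sum>k<L. F (s k)) = (\<Sum>k<L. if s k then F True else F False)"
    by (rule sum.cong) auto
  also have "\<dots> = (\<Sum>k\<in>{..<L} \<inter> {k. s k}. F True) + (\<Sum>k\<in>{..<L} \<inter> - {k. s k}. F False)"
    by (rule sum.If_cases) simp
  also have "{..<L} \<inter> {k. s k} = {k\<in>{..<L}. s k = True}" by auto
  also have "{..<L} \<inter> - {k. s k} = {k\<in>{..<L}. s k = False}" by auto
  finally show ?thesis by (simp add: row_count_def sum_constant_scaleR)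
qed

lemma sum_PiE_row_count:
  "(\<Sum>s\<in>{..<L} \<rightarrow>\<^sub>E (UNIV::bool set). f (row_count L b s)) = (\<Sum>A\<in>Pow {..<L}. f (card A))"
proof (rule sum.reindex_bij_witness[where i = "\<lambda>A. restrict (\<lambda>k. if k \<in> A then b else \<not> b) {..<L}"
      and j = "\<lambda>s. {k\<in>{..<L}. s k = b}"])
  fix s assume "s \<in> {..<L} \<rightarrow>\<^sub>E (UNIV::bool set)"
  then show "restrict (\<lambda>k. if k \<in> {k \<in> {..<L}. s k = b} then b else \<not> b) {..<L} = s"
    by (auto simp: PiE_def extensional_def fun_eq_iff)
qed (auto simp: row_count_def)

definition attn_form :: "real^'d \<Rightarrow> real^'d \<Rightarrow> real^'d \<Rightarrow> real^'d \<Rightarrow> real" where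
  "attn_form mu0 mu1 u v = (u \<bullet> mu0) * (mu0 \<bullet> v) + (u \<bullet> mu1) * (mu1 \<bullet> v)"

lemma attn_form_commute: "attn_form mu0 mu1 u v = attn_form mu0 mu1 v u"
  by (simp add: attn_form_def inner_commute mult.commute)

lemma attn_form_swap: "attn_form mu1 mu0 u v = attn_form mu0 mu1 u v"
  by (simp add: attn_form_def)

lemma lin_transf_eq:
  "lin_transf L lam mu0 mu1 X l
    = (2 * lam / real L) *\<^sub>R (\<Sum>k<L. attn_form mu0 mu1 (X l) (X k) *\<^sub>R X k)"
  unfolding lin_transf_def lin_head_def attn_form_def
  by (simp add: scaleR_sum_right scaleR_add_left sum.distrib algebra_simps)

lemma norm_orthonormal_comb:
  fixes m0 m1 :: "'a::real_inner"
  assumes "norm m0 = 1" "norm m1 = 1" "m0 \<bullet> m1 = 0"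
  shows "(norm (x *\<^sub>R m0 + y *\<^sub>R m1))\<^sup>2 = x\<^sup>2 + y\<^sup>2"
  using assms unfolding power2_norm_eq_inner
  by (simp add: norm_eq_1 inner_add_left inner_add_right inner_commute[of m1 m0]
      power2_eq_square)

lemma sum_sample_sq_error:
  fixes m0 m1 mu0 mu1 :: "real^'d" and L :: nat and lam :: real and s :: "nat \<Rightarrow> bool"
  assumes "norm m0 = 1" "norm m1 = 1" "m0 \<bullet> m1 = 0"
  defines "c \<equiv> 2 * lam / real L" and "G \<equiv> attn_form mu0 mu1"
    and "n1 \<equiv> real (row_count L True s)" and "n0 \<equiv> real (row_count L False s)"
  shows "(\<Sum>l<L. (norm (sample m0 m1 s l - lin_transf L lam mu0 mu1 (sample m0 m1 s) l))\<^sup>2)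
    = n1 * (1 - c * n1 * G m1 m1)\<^sup>2 + n0 * (1 - c * n0 * G m0 m0)\<^sup>2
      + c\<^sup>2 * real L * n1 * n0 * (G m0 m1)\<^sup>2"
proof -
  have transf: "lin_transf L lam mu0 mu1 (sample m0 m1 s) l
      = (c * n0 * G (sample m0 m1 s l) m0) *\<^sub>R m0 + (c * n1 * G (sample m0 m1 s l) m1) *\<^sub>R m1" for l
    using sum_comp_bool_row_count[where
        F = "\<lambda>b. G (sample m0 m1 s l) (if b then m1 else m0) *\<^sub>R (if b then m1 else m0)"]
    unfolding lin_transf_eq
    by (simp add: sample_def[of m0 m1 s] c_def G_def n0_def n1_def algebra_simps)
  define E where "E b = (if b then (c * n0 * G m0 m1)\<^sup>2 + (1 - c * n1 * G m1 m1)\<^sup>2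
                                else (1 - c * n0 * G m0 m0)\<^sup>2 + (c * n1 * G m0 m1)\<^sup>2)" for b
  have "(norm (sample m0 m1 s l - lin_transf L lam mu0 mu1 (sample m0 m1 s) l))\<^sup>2 = E (s l)" for l
  proof (cases "s l")
    case True
    then have "sample m0 m1 s l - lin_transf L lam mu0 mu1 (sample m0 m1 s) l
        = (- (c * n0 * G m0 m1)) *\<^sub>R m0 + (1 - c * n1 * G m1 m1) *\<^sub>R m1"
      by (simp add: transf sample_def attn_form_commute[of _ _ m1 m0] G_def algebra_simps)
    then show ?thesis
      using True unfolding E_def by (metis norm_orthonormal_comb[OF assms(1-3)] power2_minus)
  next
    case False
    then have "sample m0 m1 s l - lin_transf L lam mu0 mu1 (sample m0 m1 s) l
        = (1 - c * n0 * G m0 m0) *\<^sub>R m0 + (- (c * n1 * G m0 m1)) *\<^sub>R m1"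
      by (simp add: transf sample_def algebra_simps)
    then show ?thesis
      using False unfolding E_def
      by (metis norm_orthonormal_comb[OF assms(1-3)] power2_minus add.commute)
  qed
  then have "(\<Sum>l<L. (norm (sample m0 m1 s l - lin_transf L lam mu0 mu1 (sample m0 m1 s) l))\<^sup>2)
      = n1 * E True + n0 * E False"
    using sum_comp_bool_row_count[where F = E] by (simp add: n0_def n1_def)
  moreover have "real L = n0 + n1"
    using row_count_True_False[of L s] unfolding n0_def n1_def by linarith
  ultimately show ?thesis
    by (simp add: E_def power2_eq_square algebra_simps)
qed

lemma risk_eq_sum_Pow:
  fixes m0 m1 mu0 mu1 :: "real^'d" and L :: nat and lam :: real
  assumes "norm m0 = 1" "norm m1 = 1" "m0 \<bullet> m1 = 0"
  defines "c \<equiv> 2 * lam / real L" and "G \<equiv> attn_form mu0 mu1"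
  shows "risk L lam m0 m1 mu0 mu1 = (1 / real L) * ((1 / 2 ^ L) * (\<Sum>A\<in>Pow {..<L}.
      real (card A) * (1 - c * real (card A) * G m1 m1)\<^sup>2
      + c\<^sup>2 * real L * real (card A) * (real L - real (card A)) * (G m0 m1)\<^sup>2
      + real (card A) * (1 - c * real (card A) * G m0 m0)\<^sup>2))"
proof -
  define q1 where
    "q1 k = k * (1 - c * k * G m1 m1)\<^sup>2 + c\<^sup>2 * real L * k * (real L - k) * (G m0 m1)\<^sup>2"
    for k :: real
  define q0 where "q0 k = k * (1 - c * k * G m0 m0)\<^sup>2" for k :: real
  let ?S = "{..<L} \<rightarrow>\<^sub>E (UNIV :: bool set)"
  have "(\<Sum>l<L. (norm (sample m0 m1 s l - lin_transf L lam mu0 mu1 (sample m0 m1 s) l))\<^sup>2)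
      = q1 (real (row_count L True s)) + q0 (real (row_count L False s))" for s
  proof -
    have "real L - real (row_count L True s) = real (row_count L False s)"
      using row_count_True_False[of L s] by linarith
    then show ?thesis
      unfolding sum_sample_sq_error[OF assms(1-3)] q0_def q1_def c_def G_def by (simp only:)
  qed
  moreover have "risk L lam m0 m1 mu0 mu1 = (1 / real L) * ((1 / 2 ^ L) * (\<Sum>s\<in>?S.
      \<Sum>l<L. (norm (sample m0 m1 s l - lin_transf L lam mu0 mu1 (sample m0 m1 s) l))\<^sup>2))"
    unfolding risk_def sum_distrib_left[symmetric] by (simp add: sum.swap[of _ "{..<L}"])
  \<comment> \<open>the counts of rows equal to m1 and to m0 have the same law, so both become card A\<close>
  moreover have "(\<Sum>s\<in>?S. q1 (real (row_count L True s)) + q0 (real (row_count L False s)))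
      = (\<Sum>A\<in>Pow {..<L}. q1 (real (card A)) + q0 (real (card A)))"
    using sum_PiE_row_count[where f = "\<lambda>n. q1 (real n)"]
      sum_PiE_row_count[where f = "\<lambda>n. q0 (real n)"]
    by (simp add: sum.distrib)
  ultimately show ?thesis
    by (simp add: q0_def q1_def add.assoc)
qed

lemma risk_closed_form:
  fixes m0 m1 mu0 mu1 :: "real^'d"
  assumes "L > 0" and orth: "norm m0 = 1" "norm m1 = 1" "m0 \<bullet> m1 = 0"
  defines "G \<equiv> attn_form mu0 mu1"
  shows "risk L lam m0 m1 mu0 mu1 = 1 - lam * (real L + 1) / real L * (G m0 m0 + G m1 m1)
      + lam\<^sup>2 * (real L + 3) / (2 * real L) * ((G m0 m0)\<^sup>2 + (G m1 m1)\<^sup>2)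
      + lam\<^sup>2 * (real L - 1) / real L * (G m0 m1)\<^sup>2"
proof -
  define c where "c = 2 * lam / real L"
  have "risk L lam m0 m1 mu0 mu1 = (1 / real L) * ((1 / 2 ^ L) * (\<Sum>A\<in>Pow {..<L}.
      0 + (2 + c\<^sup>2 * (real L)\<^sup>2 * (G m0 m1)\<^sup>2) * real (card A)
      + (- 2 * c * (G m0 m0 + G m1 m1) - c\<^sup>2 * real L * (G m0 m1)\<^sup>2) * real (card A) ^ 2
      + c\<^sup>2 * ((G m0 m0)\<^sup>2 + (G m1 m1)\<^sup>2) * real (card A) ^ 3))" (is "_ = _ * (_ * ?E)")
    unfolding risk_eq_sum_Pow[OF orth] c_def[symmetric] G_def[symmetric]
    by (intro arg_cong2[where f = "(*)"] refl sum.cong)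
      (simp_all add: power2_eq_square power3_eq_cube algebra_simps)
  also have "?E = 2 ^ L * ((2 + c\<^sup>2 * (real L)\<^sup>2 * (G m0 m1)\<^sup>2) * real L / 2
      + (- 2 * c * (G m0 m0 + G m1 m1) - c\<^sup>2 * real L * (G m0 m1)\<^sup>2) * real L * (real L + 1) / 4
      + c\<^sup>2 * ((G m0 m0)\<^sup>2 + (G m1 m1)\<^sup>2) * (real L)\<^sup>2 * (real L + 3) / 8)"
    using sum_Pow_cubic_card[of "{..<L}" 0] by simp
  finally show ?thesis
    using \<open>L > 0\<close> by (simp only:) (simp add: c_def field_simps power2_eq_square)
qed

lemma risk_swap:
  fixes m0 m1 :: "real^'d"
  assumes "L > 0" "norm m0 = 1" "norm m1 = 1" "m0 \<bullet> m1 = 0"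
  shows "risk L lam m1 m0 mu1 mu0 = risk L lam m0 m1 mu0 mu1"
  using assms
  by (simp add: risk_closed_form inner_commute[of m1 m0] attn_form_swap
      attn_form_commute[of _ _ m1 m0] algebra_simps)

definition drift :: "nat \<Rightarrow> real \<Rightarrow> real \<Rightarrow> real" where
  "drift L lam u = 2 * lam / real L * (real L + 1 - lam * (real L + 3) * u)"

lemma risk_has_derivative_fst:
  fixes m0 m1 a b :: "real^'d"
  assumes "L > 0" "norm m0 = 1" "norm m1 = 1" "m0 \<bullet> m1 = 0"
    and "a \<bullet> m1 = 0" "b \<bullet> m0 = 0"
  shows "((\<lambda>x. risk L lam m0 m1 x b) has_derivative
           (\<lambda>h. h \<bullet> (- ((a \<bullet> m0) * drift L lam ((a \<bullet> m0)\<^sup>2))) *\<^sub>R m0)) (at a)"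
  unfolding risk_closed_form[OF assms(1-4)] attn_form_def
  by (rule has_derivative_eq_rhs, (rule derivative_eq_intros refl)+)
    (use assms(1,5,6) in \<open>simp add: fun_eq_iff inner_commute[of _ m0] inner_commute[of _ m1]
       drift_def field_simps power2_eq_square\<close>)

lemma The_gderiv_eq: "GDERIV f x :> D \<Longrightarrow> (THE D. GDERIV f x :> D) = D"
proof (rule the_equality)
  fix D' assume "GDERIV f x :> D" "GDERIV f x :> D'"
  then have "(\<lambda>h. h \<bullet> D') = (\<lambda>h. h \<bullet> D)"
    unfolding gderiv_def by (rule has_derivative_unique[rotated])
  then show "D' = D" by (metis vector_eq_ldot)
qed

lemma grad0_risk:
  fixes m0 m1 a b :: "real^'d"
  assumes "L > 0" "norm m0 = 1" "norm m1 = 1" "m0 \<bullet> m1 = 0"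
    and "a \<bullet> m1 = 0" "b \<bullet> m0 = 0"
  shows "grad0 (risk L lam m0 m1) a b = - ((a \<bullet> m0) * drift L lam ((a \<bullet> m0)\<^sup>2)) *\<^sub>R m0"
  unfolding grad0_def
  by (rule The_gderiv_eq) (use risk_has_derivative_fst[OF assms] in \<open>simp add: gderiv_def\<close>)

lemma grad1_risk:
  fixes m0 m1 a b :: "real^'d"
  assumes "L > 0" "norm m0 = 1" "norm m1 = 1" "m0 \<bullet> m1 = 0"
    and "a \<bullet> m1 = 0" "b \<bullet> m0 = 0"
  shows "grad1 (risk L lam m0 m1) a b = - ((b \<bullet> m1) * drift L lam ((b \<bullet> m1)\<^sup>2)) *\<^sub>R m1"
proof -
  have "grad1 (risk L lam m0 m1) a b = grad0 (risk L lam m1 m0) b a"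
    unfolding grad0_def grad1_def using risk_swap[OF assms(1-4)] by simp
  also have "\<dots> = - ((b \<bullet> m1) * drift L lam ((b \<bullet> m1)\<^sup>2)) *\<^sub>R m1"
    using assms by (intro grad0_risk) (auto simp: inner_commute)
  finally show ?thesis .
qed

lemma unit_inner_sq_le_1:
  fixes x m :: "'a::real_inner"
  assumes "norm x = 1" "norm m = 1"
  shows "(x \<bullet> m)\<^sup>2 \<le> 1"
  using Cauchy_Schwarz_ineq2[of x m] assms by (simp add: abs_square_le_1)

definition sphere_step :: "real \<Rightarrow> real \<Rightarrow> real" where
  "sphere_step t p = p * (1 + t * (1 - p\<^sup>2)) / sqrt (1 + t\<^sup>2 * p\<^sup>2 * (1 - p\<^sup>2))"

lemma rgd_update_toward:
  fixes a m n :: "real^'d" and gam c :: real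
  assumes "norm a = 1" "norm m = 1"
  defines "a' \<equiv> rgd_update gam a (- (c * (a \<bullet> m)) *\<^sub>R m)"
  shows "norm a' = 1" and "a' \<bullet> m = sphere_step (gam * c) (a \<bullet> m)"
    and "a \<bullet> n = 0 \<Longrightarrow> m \<bullet> n = 0 \<Longrightarrow> a' \<bullet> n = 0"
proof -
  define p where "p = a \<bullet> m"
  define v where "v = a + (gam * c * p) *\<^sub>R (m - p *\<^sub>R a)"
  have unit: "a \<bullet> a = 1" "m \<bullet> m = 1"
    using assms(1,2) by (simp_all add: norm_eq_1)
  have a'_eq: "a' = (1 / norm v) *\<^sub>R v"
    unfolding a'_def rgd_update_def v_def p_def Let_def by (simp add: algebra_simps)
  have "v \<bullet> v = 1 + (gam * c)\<^sup>2 * p\<^sup>2 * (1 - p\<^sup>2)"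
    unfolding v_def using unit
    by (simp add: inner_add_left inner_add_right inner_diff_left inner_diff_right
        inner_commute[of m a] p_def power2_eq_square algebra_simps)
  moreover have "p\<^sup>2 \<le> 1"
    unfolding p_def using assms(1,2) by (rule unit_inner_sq_le_1)
  ultimately have norm_v: "norm v = sqrt (1 + (gam * c)\<^sup>2 * p\<^sup>2 * (1 - p\<^sup>2))" "norm v > 0"
    by (simp_all add: norm_eq_sqrt_inner add_pos_nonneg)
  then show "norm a' = 1"
    unfolding a'_eq by simp
  have "v \<bullet> m = p * (1 + gam * c * (1 - p\<^sup>2))"
    unfolding v_def using unit
    by (simp add: inner_add_left inner_diff_left p_def power2_eq_square algebra_simps)
  then show "a' \<bullet> m = sphere_step (gam * c) (a \<bullet> m)"
    unfolding a'_eq sphere_step_def norm_v(1) p_def[symmetric] by simp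
  show "a' \<bullet> n = 0" if "a \<bullet> n = 0" "m \<bullet> n = 0"
    unfolding a'_eq v_def using that by (simp add: inner_add_left inner_diff_left)
qed

lemma sphere_step_sgn:
  assumes "0 \<le> t" "p\<^sup>2 \<le> 1"
  shows "sgn (sphere_step t p) = sgn p"
proof -
  have "0 \<le> t\<^sup>2 * p\<^sup>2 * (1 - p\<^sup>2)" "0 \<le> t * (1 - p\<^sup>2)"
    using assms by simp_all
  then have "0 < (1 + t * (1 - p\<^sup>2)) / sqrt (1 + t\<^sup>2 * p\<^sup>2 * (1 - p\<^sup>2))"
    by (intro divide_pos_pos) auto
  moreover have "sphere_step t p = p * ((1 + t * (1 - p\<^sup>2)) / sqrt (1 + t\<^sup>2 * p\<^sup>2 * (1 - p\<^sup>2)))"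
    unfolding sphere_step_def by simp
  ultimately show ?thesis
    by (simp only: sgn_mult sgn_pos)
qed

lemma sphere_step_sq_ge:
  assumes "0 \<le> t" "t \<le> 1" "p\<^sup>2 \<le> 1"
  shows "p\<^sup>2 + t * p\<^sup>2 * (1 - p\<^sup>2) / 2 \<le> (sphere_step t p)\<^sup>2"
proof -
  define u where "u = p\<^sup>2"
  define A where "A = 1 + t * (1 - u)"
  define D where "D = 1 + t\<^sup>2 * (u * (1 - u))"
  have u: "0 \<le> u" "u \<le> 1"
    using assms(3) by (auto simp: u_def)
  have "u * (1 - u) \<le> 1" "0 \<le> u * (1 - u)"
    using u by (simp_all add: mult_le_one)
  then have "t\<^sup>2 * (u * (1 - u)) \<le> 1" "0 \<le> t\<^sup>2 * (u * (1 - u))"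
    using assms by (simp_all add: mult_le_one power_le_one)
  then have D: "1 \<le> D" "D \<le> 2"
    unfolding D_def by linarith+
  have "A\<^sup>2 - D = t * (1 - u) * (2 + t * (1 - 2 * u))"
    unfolding A_def D_def by (simp add: power2_eq_square algebra_simps)
  also have "\<dots> \<ge> t * (1 - u) * 1"
  proof (intro mult_left_mono)
    have "t * (- 1) \<le> t * (1 - 2 * u)"
      using assms u by (intro mult_left_mono) auto
    then show "1 \<le> 2 + t * (1 - 2 * u)"
      using assms by linarith
  qed (use assms u in auto)
  finally have gain: "t * (1 - u) \<le> A\<^sup>2 - D" by simp
  have "(sphere_step t p)\<^sup>2 = u * A\<^sup>2 / D"
    using D unfolding sphere_step_def A_def D_def u_def
    by (simp add: power_divide power_mult_distrib mult.assoc)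
  also have "\<dots> = u + u * (A\<^sup>2 - D) / D"
    using D by (simp add: field_simps)
  finally have "(sphere_step t p)\<^sup>2 = u + u * (A\<^sup>2 - D) / D" .
  moreover have "u * (t * (1 - u)) / 2 \<le> u * (A\<^sup>2 - D) / D"
  proof (rule frac_le)
    have "0 \<le> u * (t * (1 - u))"
      using u assms(1) by simp
    moreover show "u * (t * (1 - u)) \<le> u * (A\<^sup>2 - D)"
      using gain u(1) by (rule mult_left_mono)
    ultimately show "0 \<le> u * (A\<^sup>2 - D)"
      by linarith
  qed (use D in auto)
  moreover have "t * p\<^sup>2 * (1 - p\<^sup>2) / 2 = u * (t * (1 - u)) / 2"
    by (simp add: u_def)
  ultimately show ?thesis
    unfolding u_def by linarith
qed

lemma incseq_tendsto_1_of_gain: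
  fixes u :: "nat \<Rightarrow> real"
  assumes "incseq u" "\<And>k. u k \<le> 1" "0 < e" "\<And>k. u k + e * (1 - u k)\<^sup>2 \<le> u (Suc k)"
  shows "u \<longlonglongrightarrow> 1"
proof -
  obtain l where l: "u \<longlonglongrightarrow> l"
    using incseq_convergent[OF assms(1), of 1] assms(2) by blast
  have "(\<lambda>k. e * (1 - u k)\<^sup>2) \<longlonglongrightarrow> e * (1 - l)\<^sup>2"
    by (intro tendsto_intros l)
  moreover have "(\<lambda>k. u (Suc k) - u k) \<longlonglongrightarrow> l - l"
    by (intro tendsto_diff LIMSEQ_Suc l)
  ultimately have "e * (1 - l)\<^sup>2 \<le> l - l"
    using assms(4) by (intro LIMSEQ_le) (auto simp: algebra_simps)
  then show ?thesis
    using l \<open>0 < e\<close> by (simp add: mult_le_0_iff)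
qed

lemma sphere_step_iter_tendsto_sgn:
  fixes p t :: "nat \<Rightarrow> real"
  assumes "0 < c" "\<And>k. 0 \<le> t k" "\<And>k. t k \<le> 1" "\<And>k. c * (1 - (p k)\<^sup>2) \<le> t k"
    and "\<And>k. (p k)\<^sup>2 \<le> 1" "\<And>k. p (Suc k) = sphere_step (t k) (p k)" "p 0 \<noteq> 0"
  shows "p \<longlonglongrightarrow> sgn (p 0)"
proof -
  have sgn_p: "sgn (p k) = sgn (p 0)" for k
    by (induction k) (simp_all add: assms(2,5,6) sphere_step_sgn)
  define u where "u k = (p k)\<^sup>2" for k
  have gain: "u k + t k * u k * (1 - u k) / 2 \<le> u (Suc k)" for k
    unfolding u_def assms(6) using assms(2,3,5) by (rule sphere_step_sq_ge)
  have u_bounds: "0 \<le> u k" "u k \<le> 1" for k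
    using assms(5) by (simp_all add: u_def)
  have inc: "incseq u"
  proof (rule incseq_SucI)
    fix k
    have "0 \<le> t k * u k * (1 - u k) / 2"
      using assms(2)[of k] u_bounds[of k] by simp
    then show "u k \<le> u (Suc k)"
      using gain[of k] by linarith
  qed
  have "u k + c * u 0 / 2 * (1 - u k)\<^sup>2 \<le> u (Suc k)" for k
  proof -
    have "c * (1 - u k) * u 0 \<le> t k * u k"
      using assms(4)[of k] incseqD[OF inc, of 0 k] assms(2)[of k] u_bounds[of 0]
      by (intro mult_mono) (simp_all add: u_def)
    then have "c * (1 - u k) * u 0 * (1 - u k) \<le> t k * u k * (1 - u k)"
      using u_bounds[of k] by (intro mult_right_mono) simp_all
    moreover have "c * u 0 / 2 * (1 - u k)\<^sup>2 = c * (1 - u k) * u 0 * (1 - u k) / 2"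
      by (simp add: power2_eq_square)
    ultimately show ?thesis
      using gain[of k] by linarith
  qed
  moreover have "0 < c * u 0 / 2"
    using assms(1,7) by (simp add: u_def)
  ultimately have "u \<longlonglongrightarrow> 1"
    using incseq_tendsto_1_of_gain[OF inc] u_bounds by blast
  then have "(\<lambda>k. sgn (p 0) * sqrt (u k)) \<longlonglongrightarrow> sgn (p 0) * sqrt 1"
    by (intro tendsto_intros)
  moreover have "p = (\<lambda>k. sgn (p 0) * sqrt (u k))"
    by (simp add: u_def fun_eq_iff) (metis sgn_p sgn_mult_abs)
  ultimately show ?thesis
    by (metis real_sqrt_one mult_1_right)
qed

lemma tendsto_unit_vector:
  fixes x :: "nat \<Rightarrow> 'a::real_inner"
  assumes "\<And>k. norm (x k) = 1" "norm m = 1" "(\<lambda>k. x k \<bullet> m) \<longlonglongrightarrow> s" "\<bar>s\<bar> = 1"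
  shows "x \<longlonglongrightarrow> s *\<^sub>R m"
proof -
  have unit: "x k \<bullet> x k = 1" "m \<bullet> m = 1" "s * s = 1" for k
    using assms(1,2,4) by (simp_all add: norm_eq_1 abs_square_eq_1[symmetric] power2_eq_square)
  have "norm (x k - s *\<^sub>R m) = sqrt (2 - 2 * s * (x k \<bullet> m))" for k
    unfolding norm_eq_sqrt_inner using unit
    by (simp add: inner_diff_left inner_diff_right inner_commute[of m "x k"] algebra_simps)
  moreover have "(\<lambda>k. sqrt (2 - 2 * s * (x k \<bullet> m))) \<longlonglongrightarrow> sqrt (2 - 2 * s * s)"
    by (intro tendsto_intros assms(3))
  ultimately have "(\<lambda>k. norm (x k - s *\<^sub>R m)) \<longlonglongrightarrow> 0"
    using unit(3) by (simp add: mult.assoc)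
  then show ?thesis
    by (simp add: tendsto_norm_zero_iff LIM_zero_cancel)
qed

lemma drift_bounds:
  assumes "0 < L" "0 < lam" "lam \<le> (real L + 1) / (real L + 3)" "0 \<le> u" "u \<le> 1"
  shows "2 * lam\<^sup>2 * (real L + 3) / real L * (1 - u) \<le> drift L lam u"
    and "drift L lam u \<le> 2 * lam * (real L + 1) / real L"
proof -
  have "lam * (real L + 3) \<le> real L + 1"
    using assms(3) by (simp add: field_simps)
  then have "0 \<le> 2 * lam / real L * (real L + 1 - lam * (real L + 3))"
    using assms(1,2) by simp
  moreover have "drift L lam u - 2 * lam\<^sup>2 * (real L + 3) / real L * (1 - u)
      = 2 * lam / real L * (real L + 1 - lam * (real L + 3))"
    unfolding drift_def using assms(1) by (simp add: field_simps power2_eq_square)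
  ultimately show "2 * lam\<^sup>2 * (real L + 3) / real L * (1 - u) \<le> drift L lam u"
    by linarith
  have "0 \<le> 2 * lam / real L * (lam * (real L + 3) * u)"
    using assms(1,2,4) by simp
  moreover have "2 * lam * (real L + 1) / real L - drift L lam u
      = 2 * lam / real L * (lam * (real L + 3) * u)"
    unfolding drift_def using assms(1) by (simp add: field_simps)
  ultimately show "drift L lam u \<le> 2 * lam * (real L + 1) / real L"
    by linarith
qed

lemma rgd_step_Mtilde:
  fixes m0 m1 a b :: "real^'d" and L :: nat and lam gam :: real
  assumes "L > 0" "norm m0 = 1" "norm m1 = 1" "m0 \<bullet> m1 = 0" and "(a, b) \<in> Mtilde m0 m1"
  defines "a' \<equiv> rgd_update gam a (grad0 (risk L lam m0 m1) a b)"
    and "b' \<equiv> rgd_update gam b (grad1 (risk L lam m0 m1) a b)"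
  shows "(a', b') \<in> Mtilde m0 m1"
    and "a' \<bullet> m0 = sphere_step (gam * drift L lam ((a \<bullet> m0)\<^sup>2)) (a \<bullet> m0)"
    and "b' \<bullet> m1 = sphere_step (gam * drift L lam ((b \<bullet> m1)\<^sup>2)) (b \<bullet> m1)"
proof -
  have a: "norm a = 1" "a \<bullet> m1 = 0" and b: "norm b = 1" "b \<bullet> m0 = 0"
    using assms(5) by (auto simp: Mtilde_def inner_commute)
  note orth = assms(1-4)
  have a'_eq: "a' = rgd_update gam a (- (drift L lam ((a \<bullet> m0)\<^sup>2) * (a \<bullet> m0)) *\<^sub>R m0)"
    unfolding a'_def grad0_risk[OF orth a(2) b(2)] by (simp add: mult.commute)
  have b'_eq: "b' = rgd_update gam b (- (drift L lam ((b \<bullet> m1)\<^sup>2) * (b \<bullet> m1)) *\<^sub>R m1)"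
    unfolding b'_def grad1_risk[OF orth a(2) b(2)] by (simp add: mult.commute)
  have "m1 \<bullet> m0 = 0"
    using orth(4) by (simp add: inner_commute)
  then show "(a', b') \<in> Mtilde m0 m1"
    unfolding a'_eq b'_eq Mtilde_def
    using rgd_update_toward[OF a(1) orth(2)] rgd_update_toward[OF b(1) orth(3)] a b orth(4)
    by (simp add: inner_commute)
  show "a' \<bullet> m0 = sphere_step (gam * drift L lam ((a \<bullet> m0)\<^sup>2)) (a \<bullet> m0)"
    unfolding a'_eq by (rule rgd_update_toward[OF a(1) orth(2)])
  show "b' \<bullet> m1 = sphere_step (gam * drift L lam ((b \<bullet> m1)\<^sup>2)) (b \<bullet> m1)"
    unfolding b'_eq by (rule rgd_update_toward[OF b(1) orth(3)])
qed

lemma rgd_iter_Mtilde: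
  fixes m0 m1 :: "real^'d" and L :: nat and lam gam :: real
  assumes "L > 0" "norm m0 = 1" "norm m1 = 1" "m0 \<bullet> m1 = 0" and "init \<in> Mtilde m0 m1"
  defines "x \<equiv> rgd_iter (risk L lam m0 m1) gam init"
  shows "x k \<in> Mtilde m0 m1"
    and "fst (x (Suc k)) \<bullet> m0 = sphere_step (gam * drift L lam ((fst (x k) \<bullet> m0)\<^sup>2)) (fst (x k) \<bullet> m0)"
    and "snd (x (Suc k)) \<bullet> m1 = sphere_step (gam * drift L lam ((snd (x k) \<bullet> m1)\<^sup>2)) (snd (x k) \<bullet> m1)"
proof -
  note step = rgd_step_Mtilde[OF assms(1-4), of "fst (x k)" "snd (x k)" gam lam]
  show "x k \<in> Mtilde m0 m1"
  proof (induction k)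
    case (Suc k)
    then show ?case
      using rgd_step_Mtilde(1)[OF assms(1-4), of "fst (x k)" "snd (x k)" gam lam]
      by (simp add: x_def split_beta)
  qed (simp add: x_def assms(5))
  then show "fst (x (Suc k)) \<bullet> m0 = sphere_step (gam * drift L lam ((fst (x k) \<bullet> m0)\<^sup>2)) (fst (x k) \<bullet> m0)"
    and "snd (x (Suc k)) \<bullet> m1 = sphere_step (gam * drift L lam ((snd (x k) \<bullet> m1)\<^sup>2)) (snd (x k) \<bullet> m1)"
    using step by (simp_all add: x_def split_beta)
qed

lemma overlap_tendsto_sgn:
  fixes p :: "nat \<Rightarrow> real"
  assumes "0 < L" "0 < lam" "lam \<le> (real L + 1) / (real L + 3)"
    and "0 < gam" "gam * (2 * lam * (real L + 1) / real L) \<le> 1"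
    and "\<And>k. (p k)\<^sup>2 \<le> 1" "\<And>k. p (Suc k) = sphere_step (gam * drift L lam ((p k)\<^sup>2)) (p k)"
    and "p 0 \<noteq> 0"
  shows "p \<longlonglongrightarrow> sgn (p 0)"
proof (rule sphere_step_iter_tendsto_sgn)
  note bounds = drift_bounds[OF assms(1-3) zero_le_power2 assms(6)]
  show "0 < gam * (2 * lam\<^sup>2 * (real L + 3) / real L)"
    using assms(1,2,4) by simp
  show "gam * (2 * lam\<^sup>2 * (real L + 3) / real L) * (1 - (p k)\<^sup>2)
      \<le> gam * drift L lam ((p k)\<^sup>2)" for k
    using mult_left_mono[OF bounds(1)[of k], of gam] assms(4) by (simp add: mult.assoc)
  show "0 \<le> gam * drift L lam ((p k)\<^sup>2)" for k
  proof -
    have "0 \<le> 2 * lam\<^sup>2 * (real L + 3) / real L * (1 - (p k)\<^sup>2)"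
      using assms(1) assms(6)[of k] by simp
    then show ?thesis
      using bounds(1)[of k] assms(4) by simp
  qed
  show "gam * drift L lam ((p k)\<^sup>2) \<le> 1" for k
    using mult_left_mono[OF bounds(2)[of k], of gam] assms(4,5) by simp
qed (use assms in auto)

lemma rgd_iter_tendsto:
  fixes m0 m1 :: "real^'d"
  assumes "0 < L" "norm m0 = 1" "norm m1 = 1" "m0 \<bullet> m1 = 0"
    and "0 < lam" "lam \<le> (real L + 1) / (real L + 3)"
    and "0 < gam" "gam * (2 * lam * (real L + 1) / real L) \<le> 1"
    and "init \<in> Mtilde m0 m1" "fst init \<bullet> m0 \<noteq> 0" "snd init \<bullet> m1 \<noteq> 0"
  shows "rgd_iter (risk L lam m0 m1) gam init
           \<longlonglongrightarrow> (sgn (fst init \<bullet> m0) *\<^sub>R m0, sgn (snd init \<bullet> m1) *\<^sub>R m1)"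
proof -
  let ?x = "rgd_iter (risk L lam m0 m1) gam init"
  note iter = rgd_iter_Mtilde[OF assms(1-4,9), of lam gam]
  have unit: "norm (fst (?x k)) = 1" "norm (snd (?x k)) = 1" for k
    using iter(1)[of k] by (auto simp: Mtilde_def split: prod.splits)
  note overlap = overlap_tendsto_sgn[OF assms(1,5-8)]
  have "(\<lambda>k. fst (?x k) \<bullet> m0) \<longlonglongrightarrow> sgn (fst init \<bullet> m0)"
    using overlap[of "\<lambda>k. fst (?x k) \<bullet> m0"] iter(2) unit_inner_sq_le_1[OF unit(1) assms(2)]
      assms(10)
    by simp
  then have "(\<lambda>k. fst (?x k)) \<longlonglongrightarrow> sgn (fst init \<bullet> m0) *\<^sub>R m0"
    using unit(1) assms(2,10) by (intro tendsto_unit_vector) (auto simp: abs_sgn_eq)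
  moreover have "(\<lambda>k. snd (?x k) \<bullet> m1) \<longlonglongrightarrow> sgn (snd init \<bullet> m1)"
    using overlap[of "\<lambda>k. snd (?x k) \<bullet> m1"] iter(3) unit_inner_sq_le_1[OF unit(2) assms(3)]
      assms(11)
    by simp
  then have "(\<lambda>k. snd (?x k)) \<longlonglongrightarrow> sgn (snd init \<bullet> m1) *\<^sub>R m1"
    using unit(2) assms(3,11) by (intro tendsto_unit_vector) (auto simp: abs_sgn_eq)
  ultimately show ?thesis
    using tendsto_Pair by fastforce
qed

lemma inner_normalized_projection_eq_0:
  fixes v n m :: "'a::real_inner"
  defines "w \<equiv> v - (v \<bullet> n) *\<^sub>R n"
  assumes "n \<bullet> m = 0" "norm ((1 / norm w) *\<^sub>R w) = 1" "((1 / norm w) *\<^sub>R w) \<bullet> m = 0"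
  shows "v \<bullet> m = 0"
proof -
  have "w \<noteq> 0"
    using assms(3) by auto
  moreover have "w \<bullet> m = v \<bullet> m"
    using assms(2) by (simp add: w_def inner_diff_left)
  ultimately show ?thesis
    using assms(4) by simp
qed

lemma Mtilde_null_mono:
  "N \<subseteq> N' \<Longrightarrow> Mtilde_null m0 m1 N' \<Longrightarrow> Mtilde_null m0 m1 N"
  unfolding Mtilde_null_def negligible_iff_null_sets[symmetric]
  by (auto intro: negligible_subset)

lemma Mtilde_null_overlap_eq_0:
  fixes m0 m1 :: "real^'d"
  assumes "norm m0 = 1" "norm m1 = 1" "m0 \<bullet> m1 = 0"
  shows "Mtilde_null m0 m1 {init \<in> Mtilde m0 m1. fst init \<bullet> m0 = 0 \<or> snd init \<bullet> m1 = 0}"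
proof -
  let ?N = "{init \<in> Mtilde m0 m1. fst init \<bullet> m0 = 0 \<or> snd init \<bullet> m1 = 0}"
  have "{p. Mtilde_chart m0 m1 p \<in> ?N} \<subseteq> {p. (m0, 0) \<bullet> p = 0} \<union> {p. (0, m1) \<bullet> p = 0}"
  proof
    fix p assume "p \<in> {p. Mtilde_chart m0 m1 p \<in> ?N}"
    then have "fst p \<bullet> m0 = 0 \<or> snd p \<bullet> m1 = 0"
      using inner_normalized_projection_eq_0[of m1 m0 "fst p"]
        inner_normalized_projection_eq_0[of m0 m1 "snd p"] assms(3)
      by (auto simp: Mtilde_chart_def Mtilde_def Let_def inner_commute)
    then show "p \<in> {p. (m0, 0) \<bullet> p = 0} \<union> {p. (0, m1) \<bullet> p = 0}"
      by (cases p) (auto simp: inner_commute)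
  qed
  moreover have "negligible ({p. (m0, 0::real^'d) \<bullet> p = 0} \<union> {p. (0::real^'d, m1) \<bullet> p = 0})"
    using assms(1,2) by (intro negligible_Un negligible_hyperplane) (auto simp: zero_prod_def)
  ultimately have "negligible {p. Mtilde_chart m0 m1 p \<in> ?N}"
    using negligible_subset by blast
  then show ?thesis
    unfolding Mtilde_null_def negligible_iff_null_sets by auto
qed

theorem theorem2:
  fixes m0 m1 :: "real^'d" and L :: nat and lam :: real
  assumes "CARD('d) \<ge> 2" and "L \<ge> 2"
    and "norm m0 = 1" and "norm m1 = 1" and "m0 \<bullet> m1 = 0"
    and "0 < lam" and "lam \<le> (real L + 1) / (real L + 3)"
  shows "\<exists>gbar > 0. \<forall>gam. 0 < gam \<and> gam < gbar \<longrightarrow>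
           Mtilde_null m0 m1
             {init \<in> Mtilde m0 m1.
                \<not> (\<exists>s0 \<in> {-1, 1}. \<exists>s1 \<in> {-1, 1}.
                     rgd_iter (risk L lam m0 m1) gam init
                       \<longlonglongrightarrow> (s0 *\<^sub>R m0, s1 *\<^sub>R m1))}"
proof -
  define alpha where "alpha = 2 * lam * (real L + 1) / real L"
  have L: "0 < L"
    using assms(2) by simp
  then have alpha: "0 < alpha"
    using assms(6) by (simp add: alpha_def)
  have sgn_pm1: "sgn x \<in> {-1, 1}" if "x \<noteq> 0" for x :: real
    using that by (simp add: sgn_real_def)
  have "Mtilde_null m0 m1 {init \<in> Mtilde m0 m1. \<not> (\<exists>s0 \<in> {-1, 1}. \<exists>s1 \<in> {-1, 1}.
          rgd_iter (risk L lam m0 m1) gam init \<longlonglongrightarrow> (s0 *\<^sub>R m0, s1 *\<^sub>R m1))}"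
    if gam: "0 < gam" "gam < 1 / alpha" for gam
  proof (rule Mtilde_null_mono[OF subsetI Mtilde_null_overlap_eq_0[OF assms(3-5)]])
    have "gam * alpha \<le> 1"
      using gam(2) alpha by (simp add: pos_less_divide_eq)
    then show "init \<in> {init \<in> Mtilde m0 m1. fst init \<bullet> m0 = 0 \<or> snd init \<bullet> m1 = 0}"
      if "init \<in> {init \<in> Mtilde m0 m1. \<not> (\<exists>s0 \<in> {-1, 1}. \<exists>s1 \<in> {-1, 1}.
            rgd_iter (risk L lam m0 m1) gam init \<longlonglongrightarrow> (s0 *\<^sub>R m0, s1 *\<^sub>R m1))}" for init
      using that rgd_iter_tendsto[OF L assms(3-7) gam(1), of init] sgn_pm1
      unfolding alpha_def by blast
  qed
  then show ?thesis
    using alpha by (intro exI[of _ "1 / alpha"]) auto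
qed

end
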